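(* Let $G=(V,E)$ be a connected undirected graph, regarded as the metric space $(V,\delta)$ where $\delta(u,v)$ is the number of edges on a shortest $u$–$v$ path. Let $P\subsetneq V$ with $|P|\ge 2$. Then $GR_P\ge \tfrac{2}{3}$, and if $GR_P=\tfrac{2}{3}$ then $R_P=1$ and $r_P=\tfrac{3}{2}$.
   Context: For a metric space $(\mathcal{M},\delta)$ and a finite set $P\subset\mathcal{M}$ with $|P|\ge 2$, define $r_P=\min_{p,q\in P,\,p\neq q}\delta(p,q)/2$, $R_P=\sup_{x\in\mathcal{M}}\min_{p\in P}\delta(x,p)$, and the gap ratio $GR_P=R_P/r_P$. *)

theory Defs
  imports Complex_Main "HOL-Library.Extended_Real"
begin

text \<open>A metric space is given by a carrier M and a distance function delta.
  r_P = min over distinct p, q in P of delta p q / 2;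
  R_P = sup over x in M of min over p in P of delta x p (an extended real,
  since the supremum may be infinite); GR_P = R_P / r_P.\<close>

definition packing_radius :: "('a \<Rightarrow> 'a \<Rightarrow> real) \<Rightarrow> 'a set \<Rightarrow> real" where
  "packing_radius \<delta> P = Min {\<delta> p q / 2 | p q. p \<in> P \<and> q \<in> P \<and> p \<noteq> q}"

definition covering_radius :: "'a set \<Rightarrow> ('a \<Rightarrow> 'a \<Rightarrow> real) \<Rightarrow> 'a set \<Rightarrow> ereal" where
  "covering_radius M \<delta> P = (SUP x\<in>M. ereal (Min ((\<lambda>p. \<delta> x p) ` P)))"

definition gap_ratio :: "'a set \<Rightarrow> ('a \<Rightarrow> 'a \<Rightarrow> real) \<Rightarrow> 'a set \<Rightarrow> ereal" where
  "gap_ratio M \<delta> P = covering_radius M \<delta> P / ereal (packing_radius \<delta> P)"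

definition undirected_graph :: "'a set \<Rightarrow> ('a \<Rightarrow> 'a \<Rightarrow> bool) \<Rightarrow> bool" where
  "undirected_graph V E \<longleftrightarrow> (\<forall>u v. E u v \<longrightarrow> u \<in> V \<and> v \<in> V \<and> E v u)"

definition walk_of_length :: "'a set \<Rightarrow> ('a \<Rightarrow> 'a \<Rightarrow> bool) \<Rightarrow> 'a \<Rightarrow> 'a \<Rightarrow> nat \<Rightarrow> bool" where
  "walk_of_length V E u v n \<longleftrightarrow>
     (\<exists>xs. length xs = Suc n \<and> hd xs = u \<and> last xs = v \<and> set xs \<subseteq> V \<and>
           (\<forall>i < n. E (xs ! i) (xs ! Suc i)))"

definition connected_graph :: "'a set \<Rightarrow> ('a \<Rightarrow> 'a \<Rightarrow> bool) \<Rightarrow> bool" where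
  "connected_graph V E \<longleftrightarrow> undirected_graph V E \<and> V \<noteq> {} \<and>
     (\<forall>u\<in>V. \<forall>v\<in>V. \<exists>n. walk_of_length V E u v n)"

definition graph_dist :: "'a set \<Rightarrow> ('a \<Rightarrow> 'a \<Rightarrow> bool) \<Rightarrow> 'a \<Rightarrow> 'a \<Rightarrow> nat" where
  "graph_dist V E u v = (LEAST n. walk_of_length V E u v n)"

end

theory Submission
  imports Defs
begin

text \<open>A vertex outside P is at distance at least 1 from P, so R \<ge> 1. If p, q is a closest pair
  of P, at distance d = 2r, the vertex x at distance \<lfloor>d/2\<rfloor> from p on a shortest p-q path
  is at distance at least \<lfloor>d/2\<rfloor> \<ge> r - 1/2 from every point of P, since any other
  point of P is at distance at least d from p. Hence 3R = R + 2R \<ge> 1 + (2r - 1) = 2r, and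
  equality forces R = 1 and r = R + 1/2 = 3/2.\<close>

definition fun_walk :: "'a set \<Rightarrow> ('a \<Rightarrow> 'a \<Rightarrow> bool) \<Rightarrow> 'a \<Rightarrow> 'a \<Rightarrow> nat \<Rightarrow> bool" where
  "fun_walk V E u v n \<longleftrightarrow>
     (\<exists>f. f 0 = u \<and> f n = v \<and> (\<forall>i\<le>n. f i \<in> V) \<and> (\<forall>i<n. E (f i) (f (Suc i))))"

lemma walk_of_length_iff_fun_walk: "walk_of_length V E u v n \<longleftrightarrow> fun_walk V E u v n"
proof
  assume "walk_of_length V E u v n"
  then obtain xs where xs: "length xs = Suc n" "hd xs = u" "last xs = v" "set xs \<subseteq> V"
    "\<forall>i < n. E (xs ! i) (xs ! Suc i)" unfolding walk_of_length_def by blast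
  have "xs \<noteq> []" using xs(1) by auto
  hence "xs ! 0 = u" "xs ! n = v" using xs by (auto simp: hd_conv_nth last_conv_nth)
  moreover have "\<forall>i\<le>n. xs ! i \<in> V" using xs(1,4) by (auto intro!: subsetD[OF xs(4)] nth_mem)
  ultimately show "fun_walk V E u v n"
    unfolding fun_walk_def using xs(5) by (intro exI[of _ "(!) xs"]) auto
next
  assume "fun_walk V E u v n"
  then obtain f where f: "f 0 = u" "f n = v" "\<forall>i\<le>n. f i \<in> V" "\<forall>i<n. E (f i) (f (Suc i))"
    unfolding fun_walk_def by blast
  let ?xs = "map f [0..<Suc n]"
  have "hd ?xs = u" using f by (simp del: upt_Suc add: hd_map upt_conv_Cons)
  moreover have "last ?xs = v" using f by (simp add: last_map)
  moreover have "set ?xs \<subseteq> V" using f by auto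
  moreover have "\<forall>i < n. E (?xs ! i) (?xs ! Suc i)" using f(4)
    by (simp del: upt_Suc add: nth_map_upt)
  ultimately show "walk_of_length V E u v n" unfolding walk_of_length_def
    by (intro exI[of _ ?xs]) simp
qed

lemma fun_walk_zero_eq: "fun_walk V E u v 0 \<Longrightarrow> u = v"
  unfolding fun_walk_def by auto

lemma fun_walk_append:
  assumes "fun_walk V E u v n" "fun_walk V E v w m"
  shows "fun_walk V E u w (n + m)"
proof -
  obtain f where f: "f 0 = u" "f n = v" "\<forall>i\<le>n. f i \<in> V" "\<forall>i<n. E (f i) (f (Suc i))"
    using assms(1) unfolding fun_walk_def by blast
  obtain g where g: "g 0 = v" "g m = w" "\<forall>i\<le>m. g i \<in> V" "\<forall>i<m. E (g i) (g (Suc i))"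
    using assms(2) unfolding fun_walk_def by blast
  define h where "h i = (if i \<le> n then f i else g (i - n))" for i
  have "h 0 = u" using f by (simp add: h_def)
  moreover have "h (n + m) = w" using f g by (cases "m = 0") (auto simp: h_def)
  moreover have "\<forall>i\<le>n + m. h i \<in> V" using f g by (auto simp: h_def)
  moreover have "E (h i) (h (Suc i))" if i: "i < n + m" for i
  proof (cases "i < n")
    case True
    thus ?thesis using f by (simp add: h_def)
  next
    case False
    hence "i - n < m" "Suc i - n = Suc (i - n)" using i by auto
    thus ?thesis using g f False by (cases "i = n") (auto simp: h_def)
  qed
  ultimately show ?thesis unfolding fun_walk_def by blast
qed

lemma fun_walk_reverse:
  assumes "undirected_graph V E" "fun_walk V E u v n"
  shows "fun_walk V E v u n"
proof -
  obtain f where f: "f 0 = u" "f n = v" "\<forall>i\<le>n. f i \<in> V" "\<forall>i<n. E (f i) (f (Suc i))"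
    using assms(2) unfolding fun_walk_def by blast
  have "E (f (n - i)) (f (n - Suc i))" if i: "i < n" for i
  proof -
    have "E (f (n - Suc i)) (f (Suc (n - Suc i)))" using f(4) i by auto
    moreover have "Suc (n - Suc i) = n - i" using i by auto
    ultimately show ?thesis using assms(1) unfolding undirected_graph_def by metis
  qed
  thus ?thesis unfolding fun_walk_def using f by (intro exI[of _ "\<lambda>i. f (n - i)"]) auto
qed

lemma fun_walk_split:
  assumes "fun_walk V E u v n" "k \<le> n"
  obtains x where "x \<in> V" "fun_walk V E u x k" "fun_walk V E x v (n - k)"
proof -
  obtain f where f: "f 0 = u" "f n = v" "\<forall>i\<le>n. f i \<in> V" "\<forall>i<n. E (f i) (f (Suc i))"
    using assms(1) unfolding fun_walk_def by blast
  have "fun_walk V E u (f k) k"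
    unfolding fun_walk_def using f assms(2) by (intro exI[of _ f]) auto
  moreover have "fun_walk V E (f k) v (n - k)"
    unfolding fun_walk_def using f assms(2) by (intro exI[of _ "\<lambda>i. f (k + i)"]) auto
  ultimately show ?thesis using that f assms(2) by auto
qed

lemma graph_dist_fun_walk:
  assumes "connected_graph V E" "u \<in> V" "v \<in> V"
  shows "fun_walk V E u v (graph_dist V E u v)"
proof -
  have "\<exists>n. fun_walk V E u v n"
    using assms unfolding connected_graph_def walk_of_length_iff_fun_walk by blast
  thus ?thesis unfolding graph_dist_def walk_of_length_iff_fun_walk by (rule LeastI_ex)
qed

lemma graph_dist_le: "fun_walk V E u v n \<Longrightarrow> graph_dist V E u v \<le> n"
  unfolding graph_dist_def walk_of_length_iff_fun_walk by (rule Least_le)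

lemma graph_dist_triangle:
  assumes "connected_graph V E" "u \<in> V" "v \<in> V" "w \<in> V"
  shows "graph_dist V E u w \<le> graph_dist V E u v + graph_dist V E v w"
  using graph_dist_le[OF fun_walk_append[OF graph_dist_fun_walk[OF assms(1,2,3)]
        graph_dist_fun_walk[OF assms(1,3,4)]]] .

lemma graph_dist_sym:
  assumes "connected_graph V E" "u \<in> V" "v \<in> V"
  shows "graph_dist V E u v = graph_dist V E v u"
proof -
  have ug: "undirected_graph V E" using assms(1) unfolding connected_graph_def by auto
  show ?thesis
    using graph_dist_le[OF fun_walk_reverse[OF ug graph_dist_fun_walk[OF assms(1,3,2)]]]
      graph_dist_le[OF fun_walk_reverse[OF ug graph_dist_fun_walk[OF assms(1,2,3)]]]
    by simp
qed

lemma graph_dist_ge_1: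
  assumes "connected_graph V E" "u \<in> V" "v \<in> V" "u \<noteq> v"
  shows "graph_dist V E u v \<ge> 1"
  using graph_dist_fun_walk[OF assms(1,2,3)] fun_walk_zero_eq[of V E u v] assms(4)
  by (cases "graph_dist V E u v") auto

lemma graph_geodesic_point:
  assumes "connected_graph V E" "u \<in> V" "v \<in> V" "k \<le> graph_dist V E u v"
  obtains x where "x \<in> V" "graph_dist V E u x = k" "graph_dist V E x v = graph_dist V E u v - k"
proof -
  obtain x where x: "x \<in> V" "fun_walk V E u x k" "fun_walk V E x v (graph_dist V E u v - k)"
    using fun_walk_split[OF graph_dist_fun_walk[OF assms(1-3)] assms(4)] .
  have "graph_dist V E u v \<le> graph_dist V E u x + graph_dist V E x v"
    using graph_dist_triangle[OF assms(1,2) x(1) assms(3)] .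
  with graph_dist_le[OF x(2)] graph_dist_le[OF x(3)] assms(4)
  have "graph_dist V E u x = k" "graph_dist V E x v = graph_dist V E u v - k" by arith+
  with x(1) show ?thesis by (rule that)
qed

lemma packing_radius_attained:
  assumes "finite P" "card P \<ge> 2"
  obtains p q where "p \<in> P" "q \<in> P" "p \<noteq> q" "packing_radius \<delta> P = \<delta> p q / 2"
    and "\<And>p' q'. p' \<in> P \<Longrightarrow> q' \<in> P \<Longrightarrow> p' \<noteq> q' \<Longrightarrow> packing_radius \<delta> P \<le> \<delta> p' q' / 2"
proof -
  let ?D = "{\<delta> p q / 2 | p q. p \<in> P \<and> q \<in> P \<and> p \<noteq> q}"
  have fin: "finite ?D"
    by (rule finite_subset[OF _ finite_image_set2[of "\<lambda>p. p \<in> P" "\<lambda>q. q \<in> P" "\<lambda>p q. \<delta> p q / 2"]])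
       (use assms(1) in auto)
  have "\<not> card P \<le> Suc 0" using assms(2) by simp
  then obtain p q where "p \<in> P" "q \<in> P" "p \<noteq> q"
    using card_le_Suc0_iff_eq[OF assms(1)] by blast
  hence "?D \<noteq> {}" by blast
  have "packing_radius \<delta> P \<in> ?D"
    unfolding packing_radius_def by (rule Min_in[OF fin \<open>?D \<noteq> {}\<close>])
  moreover have "packing_radius \<delta> P \<le> \<delta> p' q' / 2" if "p' \<in> P" "q' \<in> P" "p' \<noteq> q'" for p' q'
    unfolding packing_radius_def by (rule Min_le[OF fin]) (use that in blast)
  ultimately show ?thesis using that by blast
qed

lemma covering_radius_ge:
  assumes "finite P" "P \<noteq> {}" "x \<in> M" "\<And>p. p \<in> P \<Longrightarrow> m \<le> \<delta> x p"
  shows "ereal m \<le> covering_radius M \<delta> P"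
proof -
  have "ereal m \<le> ereal (Min ((\<lambda>p. \<delta> x p) ` P))" using assms(1,2,4) by simp
  also have "\<dots> \<le> covering_radius M \<delta> P"
    unfolding covering_radius_def using assms(3) by (rule SUP_upper)
  finally show ?thesis .
qed

lemma graph_covering_radius_ge_1:
  assumes "connected_graph V E" "P \<subseteq> V" "P \<noteq> V" "finite P" "P \<noteq> {}"
  shows "covering_radius V (\<lambda>u v. real (graph_dist V E u v)) P \<ge> 1"
proof -
  obtain x where x: "x \<in> V" "x \<notin> P" using assms(2,3) by blast
  have "ereal 1 \<le> covering_radius V (\<lambda>u v. real (graph_dist V E u v)) P"
    by (rule covering_radius_ge[OF assms(4,5) x(1)])
       (use graph_dist_ge_1[OF assms(1) x(1)] assms(2) x(2) in auto)
  thus ?thesis by (simp add: one_ereal_def)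
qed

lemma graph_packing_radius_bounds:
  assumes "connected_graph V E" "P \<subseteq> V" "finite P" "card P \<ge> 2"
  defines "\<delta> \<equiv> \<lambda>u v. real (graph_dist V E u v)"
  shows "packing_radius \<delta> P \<ge> 1/2"
    and "covering_radius V \<delta> P \<ge> ereal (packing_radius \<delta> P - 1/2)"
proof -
  obtain p q where pq: "p \<in> P" "q \<in> P" "p \<noteq> q" "packing_radius \<delta> P = \<delta> p q / 2"
    and closest: "\<And>p' q'. p' \<in> P \<Longrightarrow> q' \<in> P \<Longrightarrow> p' \<noteq> q' \<Longrightarrow> packing_radius \<delta> P \<le> \<delta> p' q' / 2"
    using packing_radius_attained[OF assms(3,4)] by blast
  have pV: "p \<in> V" "q \<in> V" using pq assms(2) by auto
  define d where "d = graph_dist V E p q"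
  have rP: "packing_radius \<delta> P = real d / 2" using pq(4) by (simp add: \<delta>_def d_def)
  show "packing_radius \<delta> P \<ge> 1/2"
    using graph_dist_ge_1[OF assms(1) pV pq(3)] rP d_def by simp
  define k where "k = d div 2"
  obtain x where x: "x \<in> V" "graph_dist V E p x = k"
    using graph_geodesic_point[OF assms(1) pV, of k] unfolding d_def[symmetric] k_def by auto
  have "ereal (real k) \<le> covering_radius V \<delta> P"
  proof (rule covering_radius_ge[OF assms(3) _ x(1)])
    fix p' assume p': "p' \<in> P"
    hence p'V: "p' \<in> V" using assms(2) by auto
    show "real k \<le> \<delta> x p'"
    proof (cases "p' = p")
      case True
      thus ?thesis using x graph_dist_sym[OF assms(1) pV(1) x(1)] by (simp add: \<delta>_def)
    next
      case False
      have "d \<le> graph_dist V E p p'" using closest[OF pq(1) p'] False rP by (simp add: \<delta>_def)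
      moreover have "graph_dist V E p p' \<le> k + graph_dist V E x p'"
        using graph_dist_triangle[OF assms(1) pV(1) x(1) p'V] x(2) by simp
      ultimately show ?thesis unfolding \<delta>_def k_def by linarith
    qed
  qed (use pq in auto)
  moreover have "packing_radius \<delta> P - 1/2 \<le> real k" unfolding rP k_def by linarith
  ultimately show "covering_radius V \<delta> P \<ge> ereal (packing_radius \<delta> P - 1/2)"
    by (meson ereal_less_eq(3) order_trans)
qed

lemma ratio_ge_two_thirds:
  fixes R :: ereal and r :: real
  assumes "R \<ge> 1" "R \<ge> ereal (r - 1/2)" "r > 0"
  shows "R / ereal r \<ge> 2/3 \<and> (R / ereal r = 2/3 \<longrightarrow> R = 1 \<and> r = 3/2)"
proof (cases R)
  case (real a)
  have "a \<ge> 1" "a \<ge> r - 1/2" using assms(1,2) real by auto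
  thus ?thesis using assms(3) unfolding real by (auto simp: field_simps one_ereal_def)
next
  case PInf
  thus ?thesis using assms(3) by simp
qed (use assms(1) in simp)

theorem lemma4:
  fixes V :: "'a set" and E :: "'a \<Rightarrow> 'a \<Rightarrow> bool" and P :: "'a set"
  assumes "connected_graph V E"
    and "P \<subseteq> V" and "P \<noteq> V" and "finite P" and "card P \<ge> 2"
  defines "\<delta> \<equiv> (\<lambda>u v. real (graph_dist V E u v))"
  shows "gap_ratio V \<delta> P \<ge> 2/3 \<and>
         (gap_ratio V \<delta> P = 2/3 \<longrightarrow>
            covering_radius V \<delta> P = 1 \<and> packing_radius \<delta> P = 3/2)"
proof -
  have "P \<noteq> {}" using assms(5) by auto
  hence "covering_radius V \<delta> P \<ge> 1"
    unfolding \<delta>_def using graph_covering_radius_ge_1[OF assms(1-4)] by blast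
  moreover note graph_packing_radius_bounds[OF assms(1,2,4,5), folded \<delta>_def]
  ultimately show ?thesis
    unfolding gap_ratio_def by (intro ratio_ge_two_thirds) auto
qed

end
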